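(* Let $(\beta_{\rm sd},\beta_{\rm rd},\beta_{\rm sr})\in\mathbb{R}_+^3$ with $\beta_{\rm rd}>0$, and set $S=\mathsf{SNR}^{\beta_{\rm sd}}$, $I=\mathsf{SNR}^{\beta_{\rm rd}}$, $C=\mathsf{SNR}^{\beta_{\rm sr}}$. Then $$\liminf_{\mathsf{SNR}\to\infty}\frac{r^{\rm(LDA\text{-}HD)}}{\log(1+\mathsf{SNR})}\ge \beta_{\rm sd}+\frac{[\beta_{\rm rd}-\beta_{\rm sd}]^+[\beta_{\rm sr}-\beta_{\rm sd}]^+}{[\beta_{\rm rd}-\beta_{\rm sd}]^++[\beta_{\rm sr}-\beta_{\rm sd}]^+}$$ (with the fraction interpreted as $0$ when its denominator vanishes), i.e. the LDA rate achieves the gDoF upper bound of the G-HD-RC.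
   Context: $r^{\rm(LDA\text{-}HD)}:=\log(1+S)+\frac{\log(1+\frac{I}{1+S})\,D}{\log(1+\frac{I}{1+S})+D}$ with $D:=[\log(1+\frac{C}{1+S})-\log(1+\frac{S}{1+S})]^+$, an achievable rate of the Gaussian half-duplex relay channel $Y_r=\sqrt{C}X_s(1-S_r)+Z_r$, $Y_d=\sqrt S X_s+e^{j\theta}\sqrt I X_rS_r+Z_d$ (unit-power inputs, unit-variance independent complex Gaussian noises, relay state $S_r\in\{0,1\}$ with $0$ = listen, $1$ = transmit). $[x]^+=\max\{x,0\}$; logs base 2. *)

theory Defs
  imports "HOL-Analysis.Analysis"
begin

definition pos_part :: "real \<Rightarrow> real" where
  "pos_part x = max x 0"

definition D_LDA :: "real \<Rightarrow> real \<Rightarrow> real" where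
  "D_LDA S C = pos_part (log 2 (1 + C / (1 + S)) - log 2 (1 + S / (1 + S)))"

definition r_LDA_HD :: "real \<Rightarrow> real \<Rightarrow> real \<Rightarrow> real" where
  "r_LDA_HD S I C =
     log 2 (1 + S) +
     (log 2 (1 + I / (1 + S)) * D_LDA S C) / (log 2 (1 + I / (1 + S)) + D_LDA S C)"

end

theory Submission
  imports Defs "HOL-Real_Asymp.Real_Asymp"
begin

text \<open>Normalised by log(1 + SNR), each logarithm in the rate has a limit: log(1 + SNR^b) gives b,
  and log(1 + SNR^a / (1 + SNR^b)) gives [a - b]^+, so the term log(1 + S/(1 + S)) in D vanishes
  and D gives [\<beta>_sr - \<beta>_sd]^+. The map (p, q) \<mapsto> pq/(p + q), extended by 0 at the origin (as HOL's x / 0 = 0 does), is continuous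
  on the closed positive quadrant since it is squeezed between 0 and min p q. Hence the normalised
  rate converges, and its limit is exactly the stated bound.\<close>

lemma ln_ratio_tendsto_of_powr_bounds:
  fixes f :: "real \<Rightarrow> real" and m c :: real
  assumes "m \<ge> 0" "c > 0"
    and bounds: "eventually (\<lambda>x. x powr m \<le> f x \<and> f x \<le> c * (1 + x) powr m) at_top"
  shows "((\<lambda>x. ln (f x) / ln (1 + x)) \<longlongrightarrow> m) at_top"
proof (rule tendsto_sandwich)
  have "((\<lambda>x::real. ln x / ln (1 + x)) \<longlongrightarrow> 1) at_top" by real_asymp
  then show "((\<lambda>x. m * (ln x / ln (1 + x))) \<longlongrightarrow> m) at_top"
    using tendsto_mult_left by fastforce
  have "((\<lambda>x::real. ln c / ln (1 + x)) \<longlongrightarrow> 0) at_top" by real_asymp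
  from tendsto_add[OF this tendsto_const[of m]]
  show "((\<lambda>x. ln c / ln (1 + x) + m) \<longlongrightarrow> m) at_top" by simp
  show "eventually (\<lambda>x. m * (ln x / ln (1 + x)) \<le> ln (f x) / ln (1 + x)) at_top"
    using bounds eventually_gt_at_top[of 1]
  proof eventually_elim
    case (elim x)
    then have "ln (x powr m) \<le> ln (f x)"
      by (subst ln_le_cancel_iff) (auto intro: less_le_trans[of 0 "x powr m"])
    with elim show ?case by (simp add: ln_powr divide_right_mono)
  qed
  show "eventually (\<lambda>x. ln (f x) / ln (1 + x) \<le> ln c / ln (1 + x) + m) at_top"
    using bounds eventually_gt_at_top[of 1]
  proof eventually_elim
    case (elim x)
    then have "ln (f x) \<le> ln (c * (1 + x) powr m)"
      by (subst ln_le_cancel_iff) (auto intro: less_le_trans[of 0 "x powr m"])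
    also have "\<dots> = ln c + m * ln (1 + x)"
      using elim \<open>c > 0\<close> by (simp add: ln_mult ln_powr)
    finally have "ln (f x) \<le> ln c + m * ln (1 + x)" .
    moreover have "ln (1 + x) > 0" using elim by simp
    ultimately show ?case by (simp add: field_simps)
  qed
qed

lemma ln_one_plus_powr_ratio_tendsto:
  assumes "b \<ge> 0"
  shows "((\<lambda>x::real. ln (1 + x powr b) / ln (1 + x)) \<longlongrightarrow> b) at_top"
proof (rule ln_ratio_tendsto_of_powr_bounds[OF assms, of 2])
  show "eventually (\<lambda>x. x powr b \<le> 1 + x powr b \<and> 1 + x powr b \<le> 2 * (1 + x) powr b) at_top"
    using eventually_gt_at_top[of 1]
  proof eventually_elim
    case (elim x)
    have "x powr b \<le> (1 + x) powr b" using elim assms by (intro powr_mono2) auto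
    moreover have "1 \<le> (1 + x) powr b" using elim assms by (simp add: ge_one_powr_ge_zero)
    ultimately show ?case by simp
  qed
qed simp

lemma ln_one_plus_powr_sum_ratio_tendsto:
  assumes "a \<ge> 0" "b \<ge> 0"
  shows "((\<lambda>x::real. ln (1 + x powr a + x powr b) / ln (1 + x)) \<longlongrightarrow> max a b) at_top"
proof (rule ln_ratio_tendsto_of_powr_bounds[of _ 3])
  show "eventually (\<lambda>x. x powr max a b \<le> 1 + x powr a + x powr b
                       \<and> 1 + x powr a + x powr b \<le> 3 * (1 + x) powr max a b) at_top"
    using eventually_gt_at_top[of 1]
  proof eventually_elim
    case (elim x)
    have "x powr a \<le> x powr max a b" "x powr b \<le> x powr max a b"
      using elim by (auto intro: powr_mono)
    moreover have "x powr max a b \<le> (1 + x) powr max a b"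
      using elim assms by (intro powr_mono2) auto
    moreover have "1 \<le> (1 + x) powr max a b" using elim assms by (simp add: ge_one_powr_ge_zero)
    moreover have "x powr max a b = x powr a \<or> x powr max a b = x powr b" by (simp add: max_def)
    ultimately show ?case by (smt (verit) powr_ge_zero)
  qed
qed (use assms in auto)

lemma log_one_plus_powr_quotient_ratio_tendsto:
  assumes "a \<ge> 0" "b \<ge> 0"
  shows "((\<lambda>x::real. log 2 (1 + x powr a / (1 + x powr b)) / log 2 (1 + x))
           \<longlongrightarrow> pos_part (a - b)) at_top"
proof -
  have "((\<lambda>x::real. ln (1 + x powr b + x powr a) / ln (1 + x) - ln (1 + x powr b) / ln (1 + x))
          \<longlongrightarrow> max b a - b) at_top"
    by (intro tendsto_diff ln_one_plus_powr_ratio_tendsto ln_one_plus_powr_sum_ratio_tendsto assms)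
  moreover have "max b a - b = pos_part (a - b)" by (simp add: pos_part_def max_def)
  moreover have "eventually (\<lambda>x. ln (1 + x powr b + x powr a) / ln (1 + x) - ln (1 + x powr b) / ln (1 + x)
                   = log 2 (1 + x powr a / (1 + x powr b)) / log 2 (1 + x)) at_top"
  proof (rule always_eventually, intro allI)
    fix x :: real
    have pos: "0 < 1 + x powr b" "0 < 1 + x powr b + x powr a"
      by (simp_all add: add_pos_nonneg)
    then have "1 + x powr a / (1 + x powr b) = (1 + x powr b + x powr a) / (1 + x powr b)"
      by (simp add: field_simps)
    with pos have "ln (1 + x powr a / (1 + x powr b)) = ln (1 + x powr b + x powr a) - ln (1 + x powr b)"
      by (simp add: ln_div)
    moreover have "log 2 u / log 2 v = ln u / ln v" for u v :: real by (simp add: log_def)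
    ultimately show "ln (1 + x powr b + x powr a) / ln (1 + x) - ln (1 + x powr b) / ln (1 + x)
                 = log 2 (1 + x powr a / (1 + x powr b)) / log 2 (1 + x)"
      by (simp add: diff_divide_distrib)
  qed
  ultimately show ?thesis using tendsto_cong by fastforce
qed

lemma tendsto_pos_part: "(f \<longlongrightarrow> l) F \<Longrightarrow> ((\<lambda>x. pos_part (f x)) \<longlongrightarrow> pos_part l) F"
  unfolding pos_part_def by (intro tendsto_max tendsto_const)

lemma tendsto_mult_div_add_nonneg:
  fixes P Q :: "'a \<Rightarrow> real"
  assumes P: "(P \<longlongrightarrow> p) F" and Q: "(Q \<longlongrightarrow> q) F" and "p \<ge> 0" "q \<ge> 0"
    and nonneg: "eventually (\<lambda>x. P x \<ge> 0 \<and> Q x \<ge> 0) F"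
  shows "((\<lambda>x. P x * Q x / (P x + Q x)) \<longlongrightarrow> p * q / (p + q)) F"
proof (cases "p + q = 0")
  case False
  then show ?thesis by (intro tendsto_intros P Q)
next
  case True
  then have "p = 0" using assms by simp
  have "((\<lambda>x. P x * Q x / (P x + Q x)) \<longlongrightarrow> 0) F"
  proof (rule tendsto_sandwich[of "\<lambda>x. 0" _ _ P])
    show "eventually (\<lambda>x. 0 \<le> P x * Q x / (P x + Q x)) F"
      using nonneg by eventually_elim auto
    show "eventually (\<lambda>x. P x * Q x / (P x + Q x) \<le> P x) F"
      using nonneg
    proof eventually_elim
      case (elim x)
      have "P x * Q x \<le> P x * (P x + Q x)" using elim by (intro mult_left_mono) auto
      with elim show ?case by (cases "P x + Q x = 0") (simp_all add: divide_le_eq)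
    qed
  qed (use P \<open>p = 0\<close> in auto)
  with True show ?thesis by simp
qed

lemma r_LDA_HD_divide:
  fixes S I C L :: real
  assumes "L > 0"
  defines "P \<equiv> log 2 (1 + I / (1 + S)) / L"
    and "Q \<equiv> pos_part (log 2 (1 + C / (1 + S)) / L - log 2 (1 + S / (1 + S)) / L)"
  shows "r_LDA_HD S I C / L = log 2 (1 + S) / L + P * Q / (P + Q)"
proof -
  define a where "a = log 2 (1 + I / (1 + S))"
  define d where "d = D_LDA S C"
  have P_eq: "P = a / L" unfolding P_def a_def ..
  have Q_eq: "Q = d / L"
    using \<open>L > 0\<close> unfolding Q_def d_def D_LDA_def pos_part_def
    by (simp add: diff_divide_distrib[symmetric] max_divide_distrib_right)
  have "P * Q / (P + Q) = (a * d / (a + d)) / L"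
    unfolding P_eq Q_eq using \<open>L > 0\<close> by (cases "a + d = 0") (simp_all add: field_simps)
  then show ?thesis unfolding r_LDA_HD_def a_def d_def by (simp add: add_divide_distrib)
qed

lemma r_LDA_HD_gdof_tendsto:
  fixes b_sd b_rd b_sr :: real
  assumes "b_sd \<ge> 0" "b_rd \<ge> 0" "b_sr \<ge> 0"
  shows "((\<lambda>snr. r_LDA_HD (snr powr b_sd) (snr powr b_rd) (snr powr b_sr) / log 2 (1 + snr))
           \<longlongrightarrow> b_sd + pos_part (b_rd - b_sd) * pos_part (b_sr - b_sd)
                       / (pos_part (b_rd - b_sd) + pos_part (b_sr - b_sd))) at_top"
proof -
  define L where "L x = log 2 (1 + x)" for x :: real
  define P where "P x = log 2 (1 + x powr b_rd / (1 + x powr b_sd)) / L x" for x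
  define Q where "Q x = pos_part (log 2 (1 + x powr b_sr / (1 + x powr b_sd)) / L x
                                  - log 2 (1 + x powr b_sd / (1 + x powr b_sd)) / L x)" for x
  have "((\<lambda>x. log 2 (1 + x powr b_sd) / L x) \<longlongrightarrow> b_sd) at_top"
    using ln_one_plus_powr_ratio_tendsto[OF assms(1)] by (simp add: L_def log_def)
  moreover have "(P \<longlongrightarrow> pos_part (b_rd - b_sd)) at_top"
    unfolding P_def L_def using log_one_plus_powr_quotient_ratio_tendsto assms by simp
  moreover have "(Q \<longlongrightarrow> pos_part (b_sr - b_sd)) at_top"
    unfolding Q_def L_def
    using tendsto_pos_part[OF tendsto_diff[OF log_one_plus_powr_quotient_ratio_tendsto[of b_sr b_sd]
                                             log_one_plus_powr_quotient_ratio_tendsto[of b_sd b_sd]]]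
      assms by (simp add: pos_part_def)
  moreover have "eventually (\<lambda>x. P x \<ge> 0 \<and> Q x \<ge> 0) at_top"
    using eventually_gt_at_top[of 1]
    by eventually_elim (auto simp: P_def Q_def L_def pos_part_def add_pos_nonneg)
  ultimately have "((\<lambda>x. log 2 (1 + x powr b_sd) / L x + P x * Q x / (P x + Q x))
                      \<longlongrightarrow> b_sd + pos_part (b_rd - b_sd) * pos_part (b_sr - b_sd)
                               / (pos_part (b_rd - b_sd) + pos_part (b_sr - b_sd))) at_top"
    by (intro tendsto_add tendsto_mult_div_add_nonneg) (auto simp: pos_part_def)
  moreover have "eventually (\<lambda>x. log 2 (1 + x powr b_sd) / L x + P x * Q x / (P x + Q x)
                   = r_LDA_HD (x powr b_sd) (x powr b_rd) (x powr b_sr) / log 2 (1 + x)) at_top"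
    using eventually_gt_at_top[of 0]
    by eventually_elim (simp add: r_LDA_HD_divide P_def Q_def L_def)
  ultimately show ?thesis using tendsto_cong by fastforce
qed

theorem proposition6:
  fixes b_sd b_rd b_sr :: real
  assumes "b_sd \<ge> 0" and "b_rd > 0" and "b_sr \<ge> 0"
  shows "ereal (b_sd + (pos_part (b_rd - b_sd) * pos_part (b_sr - b_sd)) /
                       (pos_part (b_rd - b_sd) + pos_part (b_sr - b_sd)))
         \<le> Liminf at_top (\<lambda>snr::real. ereal
              (r_LDA_HD (snr powr b_sd) (snr powr b_rd) (snr powr b_sr) / log 2 (1 + snr)))"
  using lim_imp_Liminf[OF trivial_limit_at_top_linorder
          r_LDA_HD_gdof_tendsto[THEN tendsto_ereal]] assms
  by simp

end
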